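(* Let $f\colon\mathbb{R}^d\to\mathbb{R}$ be differentiable with $\ell$-Lipschitz continuous gradient, let $g\colon\mathbb{R}^d\to\mathbb{R}$ be continuous and convex, and let $h\colon\mathbb{R}^d\to(-\infty,+\infty]$ be lower semicontinuous. Let $\gamma\in(0,+\infty)$, $\tau\in[0,+\infty)$, $\nu\in(0,2)$, and let $(x_n,y_n,z_n,w_n)$ be a sequence generated by the Backward-Douglas--Rachford algorithm, i.e. starting from $y_0,z_0,w_0\in\mathbb{R}^d$, for every $n\in\mathbb{N}$, \begin{align*} x_{n+1} &\in \operatorname{argmin}_{x\in\mathbb{R}^d}\Big(f(x)+\tfrac{1}{2\gamma}\|x-y_n\|^2\Big),\\ w_{n+1} &\in \operatorname{argmin}_{w\in\mathbb{R}^d}\Big(g^*(w)-\langle w,z_n\rangle+\tfrac{\tau}{2}\|w-w_n\|^2\Big),\\ z_{n+1} &\in \operatorname{argmin}_{z\in\mathbb{R}^d}\Big(h(z)+\tfrac{1}{2\gamma}\|z-(2x_{n+1}-y_n+\gamma w_{n+1})\|^2\Big),\\ y_{n+1} &= y_n+\nu(z_{n+1}-x_{n+1}). \end{align*} Then for all $n\in\mathbb{N}$: (i) $y_n=x_{n+1}+\gamma\nabla f(x_{n+1})$; (ii) $z_n\in\partial g^*(w_{n+1})+\tau(w_{n+1}-w_n)$; (iii) $w_{n+1}\in\partial h(z_{n+1})-\frac{1}{\gamma}(x_{n+1}-z_{n+1})-\frac{1}{\gamma}(x_{n+1}-y_n)$; (iv) $\|y_{n+1}-y_n\|\le(1+\gamma\ell)\|x_{n+2}-x_{n+1}\|$;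 (v) $\|z_{n+2}-z_{n+1}\|\le\frac{1+\gamma\ell}{\nu}\|x_{n+3}-x_{n+2}\|+\left(1+\frac{1+\gamma\ell}{\nu}\right)\|x_{n+2}-x_{n+1}\|$.
   Context: $\|\cdot\|$ and $\langle\cdot,\cdot\rangle$ are the Euclidean norm and inner product on $\mathbb{R}^d$. $g^*(v)=\sup_{x\in\mathbb{R}^d}(\langle v,x\rangle-g(x))$ is the Fenchel conjugate. For a function $\phi$ and $x$ with $|\phi(x)|<\infty$, the regular subdifferential is $\widehat\partial\phi(x)=\{x^*:\liminf_{y\to x}\frac{\phi(y)-\phi(x)-\langle x^*,y-x\rangle}{\|y-x\|}\ge0\}$ and the limiting subdifferential $\partial\phi(x)$ is the set of $x^*$ for which there exist $x_k\to x$ with $\phi(x_k)\to\phi(x)$ and $x_k^*\in\widehat\partial\phi(x_k)$ with $x_k^*\to x^*$ (empty if $|\phi(x)|=\infty$); for convex functions it coincides with the convex subdifferential. Set sums like $A+v$ are Minkowski sums. *)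

theory Defs
  imports "HOL-Analysis.Analysis"
begin

definition fenchel_conj :: "('a::real_inner \<Rightarrow> real) \<Rightarrow> 'a \<Rightarrow> ereal" where
  "fenchel_conj g v = (SUP x. ereal (inner v x - g x))"

definition argmin_set :: "('a \<Rightarrow> 'b::linorder) \<Rightarrow> 'a set" where
  "argmin_set \<phi> = {x. \<forall>y. \<phi> x \<le> \<phi> y}"

definition lsc :: "('a::topological_space \<Rightarrow> ereal) \<Rightarrow> bool" where
  "lsc \<phi> \<longleftrightarrow> (\<forall>x. \<phi> x \<le> Liminf (at x) \<phi>)"

definition reg_subdiff :: "('a::euclidean_space \<Rightarrow> ereal) \<Rightarrow> 'a \<Rightarrow> 'a set" where
  "reg_subdiff \<phi> x =
     (if \<bar>\<phi> x\<bar> < \<infinity> then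
        {s. Liminf (at x) (\<lambda>y. (\<phi> y - \<phi> x - ereal (inner s (y - x))) / ereal (norm (y - x))) \<ge> 0}
      else {})"

definition lim_subdiff :: "('a::euclidean_space \<Rightarrow> ereal) \<Rightarrow> 'a \<Rightarrow> 'a set" where
  "lim_subdiff \<phi> x =
     (if \<bar>\<phi> x\<bar> < \<infinity> then
        {s. \<exists>xs ss. xs \<longlonglongrightarrow> x \<and> (\<lambda>k. \<phi> (xs k)) \<longlonglongrightarrow> \<phi> x
               \<and> (\<forall>k. ss k \<in> reg_subdiff \<phi> (xs k)) \<and> ss \<longlonglongrightarrow> s}
      else {})"

end

theory Submission
  imports Defs
begin

text \<open>Items (i)--(iii) are the first-order optimality conditions of the three subproblems.
  For the smooth subproblem the gradient of the objective vanishes at the minimizer.  For the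
  other two the objective is \<open>\<phi> + q\<close> with \<open>q\<close> a smooth quadratic; if \<open>\<phi>\<close> is proper, the
  minimizer has finite value and \<open>-\<nabla>q\<close> is a regular, hence limiting, subgradient of \<open>\<phi>\<close> there.
  Properness of \<open>g\<^sup>*\<close> comes from an affine minorant of the continuous convex \<open>g\<close>.
  Item (iv) follows from (i) and the Lipschitz continuity of \<open>\<nabla>f\<close>; item (v) solves the
  \<open>y\<close>-update for \<open>z\<close> and uses (iv) twice.\<close>

lemma GDERIV_scaled_dist_sq:
  fixes p u :: "'a::real_inner"
  shows "GDERIV (\<lambda>v. k * (norm (v - p))\<^sup>2) u :> (2 * k) *\<^sub>R (u - p)"
proof -
  have "GDERIV (\<lambda>v. k * inner (v - p) (v - p)) u :> (2 * k) *\<^sub>R (u - p)"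
    unfolding gderiv_def
    by (auto intro!: derivative_eq_intros simp: inner_commute algebra_simps)
  then show ?thesis by (simp add: power2_norm_eq_inner)
qed

lemma GDERIV_zero_at_minimum:
  fixes F :: "'a::real_inner \<Rightarrow> real"
  assumes "GDERIV F u :> D" and "\<And>v. F u \<le> F v"
  shows "D = 0"
proof -
  have "(\<lambda>h. inner h D) = (\<lambda>h. 0)"
    using assms by (intro differential_zero_maxmin[of u UNIV]) (auto simp: gderiv_def)
  then have "inner D D = 0" by (rule fun_cong)
  then show ?thesis by simp
qed

lemma prox_minimizer_gradient_eq:
  fixes f :: "'a::real_inner \<Rightarrow> real"
  assumes min: "u \<in> argmin_set (\<lambda>v. f v + 1 / (2 * \<gamma>) * (norm (v - y))\<^sup>2)"
    and grad: "GDERIV f u :> d" and \<gamma>: "\<gamma> > 0"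
  shows "y = u + \<gamma> *\<^sub>R d"
proof -
  have "GDERIV (\<lambda>v. f v + 1 / (2 * \<gamma>) * (norm (v - y))\<^sup>2) u
      :> d + (2 * (1 / (2 * \<gamma>))) *\<^sub>R (u - y)"
    by (rule GDERIV_add[OF grad GDERIV_scaled_dist_sq])
  then have "d + (2 * (1 / (2 * \<gamma>))) *\<^sub>R (u - y) = 0"
    by (rule GDERIV_zero_at_minimum) (use min in \<open>simp add: argmin_set_def\<close>)
  then have "\<gamma> *\<^sub>R (d + (1 / \<gamma>) *\<^sub>R (u - y)) = 0" by simp
  then show ?thesis using \<gamma> by (simp add: algebra_simps)
qed

lemma fermat_reg_subdiff:
  fixes \<phi> :: "'a::euclidean_space \<Rightarrow> ereal" and q :: "'a \<Rightarrow> real"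
  assumes fin: "\<bar>\<phi> u\<bar> < \<infinity>" and grad: "GDERIV q u :> d"
    and min: "\<And>v. \<phi> u + ereal (q u) \<le> \<phi> v + ereal (q v)"
  shows "- d \<in> reg_subdiff \<phi> u"
proof -
  obtain c where c: "\<phi> u = ereal c" using fin by (cases "\<phi> u") auto
  define R where "R v = (q v - (q u + inner d (v - u))) / norm (v - u)" for v
  have "(R \<longlongrightarrow> 0) (at u)"
    using grad unfolding gderiv_def has_derivative_within R_def
    by (simp add: inner_commute divide_inverse mult.commute)
  then have "((\<lambda>v. ereal (- R v)) \<longlongrightarrow> 0) (at u)"
    by (metis tendsto_ereal tendsto_minus minus_zero zero_ereal_def)
  then have R_Liminf: "Liminf (at u) (\<lambda>v. ereal (- R v)) = 0"
    by (intro lim_imp_Liminf) auto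
  have R_le: "ereal (- R v) \<le> (\<phi> v - \<phi> u - ereal (inner (- d) (v - u))) / ereal (norm (v - u))"
    if "v \<noteq> u" for v
  proof (cases "\<phi> v")
    case (real a)
    have "c + q u \<le> a + q v" using min[of v] c real by simp
    then have "- (q v - (q u + inner d (v - u))) / norm (v - u)
        \<le> (a - c + inner d (v - u)) / norm (v - u)"
      by (intro divide_right_mono) auto
    then show ?thesis using real c that by (simp add: R_def minus_divide_left)
  qed (use min[of v] c that in auto)
  have "\<forall>\<^sub>F v in at u.
      ereal (- R v) \<le> (\<phi> v - \<phi> u - ereal (inner (- d) (v - u))) / ereal (norm (v - u))"
    unfolding eventually_at_filter using R_le by (auto intro: always_eventually)
  then have "Liminf (at u) (\<lambda>v. ereal (- R v))
      \<le> Liminf (at u) (\<lambda>v. (\<phi> v - \<phi> u - ereal (inner (- d) (v - u))) / ereal (norm (v - u)))"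
    by (rule Liminf_mono)
  then show ?thesis using fin R_Liminf unfolding reg_subdiff_def by simp
qed

lemma reg_subdiff_subset_lim_subdiff: "reg_subdiff \<phi> u \<subseteq> lim_subdiff \<phi> u"
proof
  fix s assume s: "s \<in> reg_subdiff \<phi> u"
  then have "\<bar>\<phi> u\<bar> < \<infinity>" unfolding reg_subdiff_def by (auto split: if_splits)
  moreover have "\<exists>xs ss. xs \<longlonglongrightarrow> u \<and> (\<lambda>k. \<phi> (xs k)) \<longlonglongrightarrow> \<phi> u
      \<and> (\<forall>k. ss k \<in> reg_subdiff \<phi> (xs k)) \<and> ss \<longlonglongrightarrow> s"
    by (rule exI[of _ "\<lambda>_. u"], rule exI[of _ "\<lambda>_. s"]) (use s in auto)
  ultimately show "s \<in> lim_subdiff \<phi> u" unfolding lim_subdiff_def by simp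
qed

lemma argmin_plus_real_finite:
  fixes \<phi> :: "'a \<Rightarrow> ereal"
  assumes "\<And>v. \<phi> v \<noteq> -\<infinity>" and "\<phi> v\<^sub>0 \<noteq> \<infinity>"
    and "u \<in> argmin_set (\<lambda>v. \<phi> v + ereal (q v))"
  shows "\<bar>\<phi> u\<bar> < \<infinity>"
proof -
  have "\<phi> u + ereal (q u) \<le> \<phi> v\<^sub>0 + ereal (q v\<^sub>0)" using assms(3) by (simp add: argmin_set_def)
  then have "\<phi> u \<noteq> \<infinity>" using assms(1)[of v\<^sub>0] assms(2) by (cases "\<phi> v\<^sub>0") auto
  then show ?thesis using assms(1)[of u] by (cases "\<phi> u") auto
qed

lemma fermat_lim_subdiff:
  fixes \<phi> :: "'a::euclidean_space \<Rightarrow> ereal" and q :: "'a \<Rightarrow> real"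
  assumes "\<And>v. \<phi> v \<noteq> -\<infinity>" and "\<phi> v\<^sub>0 \<noteq> \<infinity>"
    and min: "u \<in> argmin_set (\<lambda>v. \<phi> v + ereal (q v))" and grad: "GDERIV q u :> d"
  shows "- d \<in> lim_subdiff \<phi> u"
proof -
  have "\<bar>\<phi> u\<bar> < \<infinity>" using assms(1,2) min by (rule argmin_plus_real_finite)
  then have "- d \<in> reg_subdiff \<phi> u"
    using grad by (rule fermat_reg_subdiff) (use min in \<open>simp add: argmin_set_def\<close>)
  then show ?thesis using reg_subdiff_subset_lim_subdiff by blast
qed

lemma convex_continuous_affine_minorant:
  fixes g :: "'a::euclidean_space \<Rightarrow> real"
  assumes "continuous_on UNIV g" "convex_on UNIV g"
  obtains v c where "\<And>x. inner v x - g x \<le> c"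
proof -
  let ?S = "epigraph UNIV g"
  have "convex ?S" using assms(2) by (rule convex_epigraphI)
  moreover have "closed ?S" unfolding epigraph_def
    by (auto intro!: closed_Collect_le continuous_on_compose2[OF assms(1)] continuous_intros)
  moreover have "(0, g 0 - 1) \<notin> ?S" by (auto simp: epigraph_def)
  ultimately obtain a b where ab: "inner a (0::'a, g 0 - 1) < b" "\<forall>p\<in>?S. inner a p > b"
    using separating_hyperplane_closed_point by blast
  obtain a1 a2 where a: "a = (a1, a2)" by (cases a)
  have above: "inner a1 x + a2 * g x > b" for x
    using ab(2) by (auto simp: epigraph_def a inner_Pair)
  have "a2 > 0"
    using ab(1) above[of 0] by (simp add: a inner_Pair algebra_simps)
  have "inner (- a1 /\<^sub>R a2) x - g x \<le> - b / a2" for x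
  proof -
    have "inner (- a1 /\<^sub>R a2) x - g x = - (inner a1 x + a2 * g x) / a2"
      using \<open>a2 > 0\<close> by (simp add: field_simps)
    also have "\<dots> \<le> - b / a2"
      using above[of x] \<open>a2 > 0\<close> by (intro divide_right_mono) auto
    finally show ?thesis .
  qed
  then show ?thesis using that by blast
qed

lemma fenchel_conj_not_MInfty: "fenchel_conj g v \<noteq> -\<infinity>"
proof -
  have "ereal (inner v 0 - g 0) \<le> fenchel_conj g v"
    unfolding fenchel_conj_def by (rule SUP_upper) simp
  then show ?thesis by auto
qed

lemma fenchel_conj_proper:
  fixes g :: "'a::euclidean_space \<Rightarrow> real"
  assumes "continuous_on UNIV g" "convex_on UNIV g"
  shows "\<exists>v. fenchel_conj g v \<noteq> \<infinity>"
proof -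
  obtain v c where "\<And>x. inner v x - g x \<le> c"
    using convex_continuous_affine_minorant[OF assms] by blast
  then have "fenchel_conj g v \<le> ereal c"
    unfolding fenchel_conj_def by (intro SUP_least) simp
  then have "fenchel_conj g v \<noteq> \<infinity>" by auto
  then show ?thesis ..
qed

lemma GDERIV_inner_right: "GDERIV (\<lambda>u. inner u z) v :> z"
  unfolding gderiv_def by (auto intro!: derivative_eq_intros)

lemma dual_step_subgradient:
  fixes g :: "'a::euclidean_space \<Rightarrow> real"
  assumes "continuous_on UNIV g" "convex_on UNIV g"
    and min: "w' \<in> argmin_set (\<lambda>u. fenchel_conj g u - ereal (inner u z)
                                     + ereal (\<tau> / 2 * (norm (u - w))\<^sup>2))"
  shows "z \<in> (\<lambda>a. a + \<tau> *\<^sub>R (w' - w)) ` lim_subdiff (fenchel_conj g) w'"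
proof -
  define q where "q u = \<tau> / 2 * (norm (u - w))\<^sup>2 - inner u z" for u
  have "fenchel_conj g u - ereal (inner u z) + ereal (\<tau> / 2 * (norm (u - w))\<^sup>2)
      = fenchel_conj g u + ereal (q u)" for u
    unfolding q_def by (cases "fenchel_conj g u") auto
  with min have min': "w' \<in> argmin_set (\<lambda>u. fenchel_conj g u + ereal (q u))" by simp
  have "GDERIV q w' :> \<tau> *\<^sub>R (w' - w) - z"
    unfolding q_def[abs_def]
    using GDERIV_diff[OF GDERIV_scaled_dist_sq[of "\<tau> / 2" w w'] GDERIV_inner_right[of z w']]
    by simp
  then have "z - \<tau> *\<^sub>R (w' - w) \<in> lim_subdiff (fenchel_conj g) w'"
    using fermat_lim_subdiff[OF fenchel_conj_not_MInfty _ min'] fenchel_conj_proper[OF assms(1,2)]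
    by force
  then show ?thesis by (rule rev_image_eqI) simp
qed

lemma prox_step_subgradient:
  fixes h :: "'a::euclidean_space \<Rightarrow> ereal"
  assumes "\<And>u. h u \<noteq> -\<infinity>" "\<exists>u. h u \<noteq> \<infinity>" and \<gamma>: "\<gamma> > 0"
    and min: "z \<in> argmin_set (\<lambda>u. h u + ereal (1 / (2 * \<gamma>) * (norm (u - p))\<^sup>2))"
  shows "(1 / \<gamma>) *\<^sub>R (p - z) \<in> lim_subdiff h z"
proof -
  have "- ((1 / \<gamma>) *\<^sub>R (z - p)) \<in> lim_subdiff h z"
    using assms(2) fermat_lim_subdiff[OF assms(1) _ min GDERIV_scaled_dist_sq] \<gamma> by auto
  then show ?thesis by (simp add: scaleR_diff_right)
qed

lemma resolvent_lipschitz: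
  fixes G :: "'a::real_normed_vector \<Rightarrow> 'a"
  assumes "L-lipschitz_on UNIV G" and "\<gamma> \<ge> 0"
  shows "norm ((a + \<gamma> *\<^sub>R G a) - (b + \<gamma> *\<^sub>R G b)) \<le> (1 + \<gamma> * L) * norm (a - b)"
proof -
  have "norm ((a + \<gamma> *\<^sub>R G a) - (b + \<gamma> *\<^sub>R G b)) = norm ((a - b) + \<gamma> *\<^sub>R (G a - G b))"
    by (simp add: algebra_simps)
  also have "\<dots> \<le> norm (a - b) + \<gamma> * norm (G a - G b)"
    using norm_triangle_ineq[of "a - b" "\<gamma> *\<^sub>R (G a - G b)"] assms(2) by simp
  also have "\<dots> \<le> norm (a - b) + \<gamma> * (L * norm (a - b))"
    using lipschitz_onD[OF assms(1), of a b] assms(2)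
    by (intro add_left_mono mult_left_mono) (auto simp: dist_norm)
  finally show ?thesis by (simp add: algebra_simps)
qed

lemma relaxation_increment_bound:
  fixes x y z :: "nat \<Rightarrow> 'a::real_normed_vector"
  assumes \<nu>: "\<nu> > 0" and y_step: "\<And>n. y (Suc n) = y n + \<nu> *\<^sub>R (z (Suc n) - x (Suc n))"
    and y_bound: "\<And>n. norm (y (Suc n) - y n) \<le> C * norm (x (n + 2) - x (Suc n))"
  shows "norm (z (n + 2) - z (Suc n)) \<le> C / \<nu> * norm (x (n + 3) - x (n + 2))
           + (1 + C / \<nu>) * norm (x (n + 2) - x (Suc n))"
proof -
  let ?a = "norm (x (n + 3) - x (n + 2))" and ?b = "norm (x (n + 2) - x (Suc n))"
  have z_eq: "z (Suc m) = x (Suc m) + (1 / \<nu>) *\<^sub>R (y (Suc m) - y m)" for m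
    using y_step[of m] \<nu> by simp
  have "z (n + 2) - z (Suc n) = (x (n + 2) - x (Suc n))
      + (1 / \<nu>) *\<^sub>R (y (n + 2) - y (Suc n)) - (1 / \<nu>) *\<^sub>R (y (Suc n) - y n)"
    using z_eq[of n] z_eq[of "Suc n"] by (simp add: algebra_simps)
  then have "norm (z (n + 2) - z (Suc n))
      \<le> ?b + (1 / \<nu>) * norm (y (n + 2) - y (Suc n)) + (1 / \<nu>) * norm (y (Suc n) - y n)"
    using \<nu> by (smt (verit) norm_scaleR norm_triangle_ineq norm_triangle_ineq4 abs_of_pos
        divide_pos_pos zero_less_one)
  also have "\<dots> \<le> ?b + (1 / \<nu>) * (C * ?a) + (1 / \<nu>) * (C * ?b)"
    using y_bound[of n] y_bound[of "Suc n"] \<nu>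
    by (intro add_mono mult_left_mono) (auto simp: numeral_3_eq_3 numeral_2_eq_2)
  also have "\<dots> = C / \<nu> * ?a + (1 + C / \<nu>) * ?b"
    by (simp add: algebra_simps)
  finally show ?thesis .
qed

theorem lemma3p4:
  fixes f g :: "'a::euclidean_space \<Rightarrow> real"
    and gf :: "'a \<Rightarrow> 'a"
    and h :: "'a \<Rightarrow> ereal"
    and L \<gamma> \<tau> \<nu> :: real
    and x y z w :: "nat \<Rightarrow> 'a"
  assumes grad: "\<And>u. GDERIV f u :> gf u"
    and lip: "L-lipschitz_on UNIV gf"
    and g_cont: "continuous_on UNIV g"
    and g_conv: "convex_on UNIV g"
    and h_lsc: "lsc h"
    and h_range: "\<And>u. h u \<noteq> -\<infinity>"
    and h_proper: "\<exists>u. h u \<noteq> \<infinity>"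
    and gamma: "\<gamma> > 0" and tau: "\<tau> \<ge> 0" and nu: "0 < \<nu>" "\<nu> < 2"
    and x_step: "\<And>n. x (Suc n) \<in> argmin_set
                   (\<lambda>u. f u + 1 / (2 * \<gamma>) * (norm (u - y n))\<^sup>2)"
    and w_step: "\<And>n. w (Suc n) \<in> argmin_set
                   (\<lambda>u. fenchel_conj g u - ereal (inner u (z n))
                        + ereal (\<tau> / 2 * (norm (u - w n))\<^sup>2))"
    and z_step: "\<And>n. z (Suc n) \<in> argmin_set
                   (\<lambda>u. h u + ereal (1 / (2 * \<gamma>) *
                        (norm (u - (2 *\<^sub>R x (Suc n) - y n + \<gamma> *\<^sub>R w (Suc n))))\<^sup>2))"
    and y_step: "\<And>n. y (Suc n) = y n + \<nu> *\<^sub>R (z (Suc n) - x (Suc n))"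
  shows "\<forall>n.
     y n = x (Suc n) + \<gamma> *\<^sub>R gf (x (Suc n))
   \<and> z n \<in> (\<lambda>a. a + \<tau> *\<^sub>R (w (Suc n) - w n)) ` lim_subdiff (fenchel_conj g) (w (Suc n))
   \<and> w (Suc n) \<in> (\<lambda>a. a - (1 / \<gamma>) *\<^sub>R (x (Suc n) - z (Suc n)) - (1 / \<gamma>) *\<^sub>R (x (Suc n) - y n))
                    ` lim_subdiff h (z (Suc n))
   \<and> norm (y (Suc n) - y n) \<le> (1 + \<gamma> * L) * norm (x (n + 2) - x (Suc n))
   \<and> norm (z (n + 2) - z (Suc n)) \<le> (1 + \<gamma> * L) / \<nu> * norm (x (n + 3) - x (n + 2))
        + (1 + (1 + \<gamma> * L) / \<nu>) * norm (x (n + 2) - x (Suc n))"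
proof -
  have i: "y n = x (Suc n) + \<gamma> *\<^sub>R gf (x (Suc n))" for n
    using x_step grad gamma by (rule prox_minimizer_gradient_eq)
  have ii: "z n \<in> (\<lambda>a. a + \<tau> *\<^sub>R (w (Suc n) - w n)) ` lim_subdiff (fenchel_conj g) (w (Suc n))"
    for n using g_cont g_conv w_step by (rule dual_step_subgradient)
  have iii: "w (Suc n) \<in> (\<lambda>a. a - (1 / \<gamma>) *\<^sub>R (x (Suc n) - z (Suc n)) - (1 / \<gamma>) *\<^sub>R (x (Suc n) - y n))
      ` lim_subdiff h (z (Suc n))" for n
  proof (rule rev_image_eqI)
    show "(1 / \<gamma>) *\<^sub>R (2 *\<^sub>R x (Suc n) - y n + \<gamma> *\<^sub>R w (Suc n) - z (Suc n)) \<in> lim_subdiff h (z (Suc n))"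
      using h_range h_proper gamma z_step by (rule prox_step_subgradient)
    show "w (Suc n) = (1 / \<gamma>) *\<^sub>R (2 *\<^sub>R x (Suc n) - y n + \<gamma> *\<^sub>R w (Suc n) - z (Suc n))
        - (1 / \<gamma>) *\<^sub>R (x (Suc n) - z (Suc n)) - (1 / \<gamma>) *\<^sub>R (x (Suc n) - y n)"
      using gamma by (simp add: algebra_simps flip: scaleR_add_left)
  qed
  have iv: "norm (y (Suc n) - y n) \<le> (1 + \<gamma> * L) * norm (x (n + 2) - x (Suc n))" for n
    using resolvent_lipschitz[OF lip, of \<gamma> "x (n + 2)" "x (Suc n)"] i[of n] i[of "Suc n"] gamma
    by simp
  have v: "norm (z (n + 2) - z (Suc n)) \<le> (1 + \<gamma> * L) / \<nu> * norm (x (n + 3) - x (n + 2))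
      + (1 + (1 + \<gamma> * L) / \<nu>) * norm (x (n + 2) - x (Suc n))" for n
    using nu(1) y_step iv by (rule relaxation_increment_bound)
  show ?thesis using i ii iii iv v by blast
qed

end
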